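(* Let $X$ be a real reflexive Banach space and let $\{F_t\}_{t \in T}$ be a non-empty family of convex existence sets in $X$ directed by reverse inclusion, i.e. for any $t_1, t_2 \in T$ there is $t_3 \in T$ with $F_{t_3} \subset F_{t_1} \cap F_{t_2}$. If $F = \bigcap_{t \in T} F_t \neq \emptyset$, then $F$ is an existence set.
   Context: For a non-empty set $F \subset X$ and $x \in X$, let $R_F(x) = \{ d \in F : \|d-c\| \le \|x-c\| \text{ for all } c \in F\}$. A non-empty set $F \subset X$ is an existence set if $R_F(x) \neq \emptyset$ for every $x \in X$. *)

theory Defs
  imports "HOL-Analysis.Analysis"
begin

text \<open>Reflexivity: the canonical embedding of X into its bidual is surjective,
  i.e. every continuous linear functional on the dual X* is evaluation at some x.\<close>
definition reflexive_space :: "'a::real_normed_vector itself \<Rightarrow> bool" where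
  "reflexive_space _ \<longleftrightarrow>
     (\<forall>\<Phi> :: ('a \<Rightarrow>\<^sub>L real) \<Rightarrow>\<^sub>L real. \<exists>x::'a. \<forall>f. blinfun_apply \<Phi> f = blinfun_apply f x)"

definition R_set :: "'a::real_normed_vector set \<Rightarrow> 'a \<Rightarrow> 'a set" where
  "R_set F x = {d \<in> F. \<forall>c\<in>F. norm (d - c) \<le> norm (x - c)}"

definition existence_set :: "'a::real_normed_vector set \<Rightarrow> bool" where
  "existence_set F \<longleftrightarrow> F \<noteq> {} \<and> (\<forall>x. R_set F x \<noteq> {})"

end

(*
  Fix x, put F = (INT t:T. F t) and let B be the set of points y with norm (y - c) <= norm (x - c)
  for all c in F, so that R_F(x) = F Int B. The sets F t Int B are closed, convex, bounded,
  directed by reverse inclusion, and nonempty because they contain R_(F t)(x). Choosing a point of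
  each gives a bounded net; by Tychonoff its evaluations against the dual space have a cluster
  point, a bounded linear functional on the dual, which by reflexivity is evaluation at some y.
  Every F t Int B contains y: otherwise a functional obtained from the Hahn-Banach theorem would
  separate y from this closed convex set, and the net, which eventually lies in F t Int B,
  could not cluster at y.
*)

theory Submission
  imports Defs
begin

section \<open>The Hahn-Banach theorem\<close>

text \<open>Partial linear functionals dominated by \<open>p\<close> are represented by their graphs, so that
  extension is inclusion.\<close>

definition dominated_linear_graph :: "('a::real_vector \<Rightarrow> real) \<Rightarrow> ('a \<times> real) set \<Rightarrow> bool" where
  "dominated_linear_graph p G \<longleftrightarrow>
     (\<forall>x a b. (x, a) \<in> G \<longrightarrow> (x, b) \<in> G \<longrightarrow> a = b) \<and>
     (\<forall>x a y b. (x, a) \<in> G \<longrightarrow> (y, b) \<in> G \<longrightarrow> (x + y, a + b) \<in> G) \<and>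
     (\<forall>x a c. (x, a) \<in> G \<longrightarrow> (c *\<^sub>R x, c * a) \<in> G) \<and>
     (\<forall>x a. (x, a) \<in> G \<longrightarrow> a \<le> p x) \<and>
     (0, 0) \<in> G"

lemma dominated_linear_graphD:
  assumes "dominated_linear_graph p G"
  shows "(x, a) \<in> G \<Longrightarrow> (x, b) \<in> G \<Longrightarrow> a = b"
    and "(x, a) \<in> G \<Longrightarrow> (y, b) \<in> G \<Longrightarrow> (x + y, a + b) \<in> G"
    and "(x, a) \<in> G \<Longrightarrow> (c *\<^sub>R x, c * a) \<in> G"
    and "(x, a) \<in> G \<Longrightarrow> a \<le> p x"
    and "(0, 0) \<in> G"
  using assms unfolding dominated_linear_graph_def by blast+

lemma dominated_linear_graph_Union_chain:
  assumes "C \<in> chains {G. dominated_linear_graph p G}" and "C \<noteq> {}"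
  shows "dominated_linear_graph p (\<Union>C)"
proof -
  have graphs: "\<And>G. G \<in> C \<Longrightarrow> dominated_linear_graph p G"
    using assms(1) unfolding chains_def by auto
  have common: "\<exists>G\<in>C. u \<in> G \<and> v \<in> G" if "u \<in> \<Union>C" and "v \<in> \<Union>C" for u v
    using that assms(1) unfolding chains_def chain_subset_def by blast
  show ?thesis
    unfolding dominated_linear_graph_def
  proof (intro conjI allI impI)
    fix x a b assume "(x, a) \<in> \<Union>C" "(x, b) \<in> \<Union>C"
    then show "a = b"
      using common graphs by (metis dominated_linear_graphD(1))
  next
    fix x a y b assume "(x, a) \<in> \<Union>C" "(y, b) \<in> \<Union>C"
    then show "(x + y, a + b) \<in> \<Union>C"
      using common graphs by (metis UnionI dominated_linear_graphD(2))
  next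
    fix x a c assume "(x, a) \<in> \<Union>C"
    then show "(c *\<^sub>R x, c * a) \<in> \<Union>C"
      using graphs dominated_linear_graphD(3) by blast
  next
    fix x a assume "(x, a) \<in> \<Union>C"
    then show "a \<le> p x"
      using graphs dominated_linear_graphD(4) by blast
  next
    show "(0, 0) \<in> \<Union>C"
      using graphs assms(2) dominated_linear_graphD(5) by blast
  qed
qed

lemma dominated_linear_graph_maximal:
  assumes "0 \<le> p 0"
  obtains M where "dominated_linear_graph p M"
    and "\<And>X. dominated_linear_graph p X \<Longrightarrow> M \<subseteq> X \<Longrightarrow> X = M"
proof -
  have "\<forall>C\<in>chains {G. dominated_linear_graph p G}.
      \<exists>U\<in>{G. dominated_linear_graph p G}. \<forall>X\<in>C. X \<subseteq> U"
  proof
    fix C assume C: "C \<in> chains {G. dominated_linear_graph p G}"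
    show "\<exists>U\<in>{G. dominated_linear_graph p G}. \<forall>X\<in>C. X \<subseteq> U"
    proof (cases "C = {}")
      case True
      have "dominated_linear_graph p {(0, 0)}"
        using assms unfolding dominated_linear_graph_def by auto
      then show ?thesis
        using True by blast
    next
      case False
      then show ?thesis
        using dominated_linear_graph_Union_chain[OF C] by blast
    qed
  qed
  from Zorn_Lemma2[OF this] show thesis
    using that by auto
qed

lemma dominated_linear_graph_extension_value:
  assumes sub: "\<And>x y. p (x + y) \<le> p x + p y" and M: "dominated_linear_graph p M"
  obtains s where "\<And>y b. (y, b) \<in> M \<Longrightarrow> b - p (y - z) \<le> s"
    and "\<And>y b. (y, b) \<in> M \<Longrightarrow> s \<le> p (y + z) - b"
proof
  define S where "S = {b - p (y - z) | y b. (y, b) \<in> M}"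
  have sep: "b1 - p (y1 - z) \<le> p (y2 + z) - b2" if "(y1, b1) \<in> M" "(y2, b2) \<in> M" for y1 b1 y2 b2
  proof -
    have "b1 + b2 \<le> p (y1 + y2)"
      using dominated_linear_graphD(4)[OF M dominated_linear_graphD(2)[OF M that]] .
    also have "y1 + y2 = (y1 - z) + (y2 + z)"
      by simp
    finally show ?thesis
      using sub[of "y1 - z" "y2 + z"] by linarith
  qed
  have "(0, 0) \<in> M"
    using M by (rule dominated_linear_graphD(5))
  then have "S \<noteq> {}" and "bdd_above S"
    unfolding S_def bdd_above_def using sep by blast+
  then show "b - p (y - z) \<le> Sup S" "Sup S \<le> p (y + z) - b" if "(y, b) \<in> M" for y b
    using that sep by (auto simp: S_def intro!: cSup_upper cSup_least)
qed

lemma dominated_linear_graph_extension_bound: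
  assumes hom: "\<And>t x. t > 0 \<Longrightarrow> p (t *\<^sub>R x) \<le> t * p x"
    and M: "dominated_linear_graph p M"
    and s_ge: "\<And>y b. (y, b) \<in> M \<Longrightarrow> b - p (y - z) \<le> s"
    and s_le: "\<And>y b. (y, b) \<in> M \<Longrightarrow> s \<le> p (y + z) - b"
    and xa: "(x, a) \<in> M"
  shows "a + t * s \<le> p (x + t *\<^sub>R z)"
proof -
  have scaled: "((1 / u) *\<^sub>R x, (1 / u) * a) \<in> M" for u
    using M xa by (rule dominated_linear_graphD(3))
  consider "t = 0" | "t > 0" | "t < 0"
    by linarith
  then show ?thesis
  proof cases
    case 1
    then show ?thesis
      using dominated_linear_graphD(4)[OF M xa] by simp
  next
    case 2
    have "s \<le> p ((1 / t) *\<^sub>R x + z) - (1 / t) * a"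
      using s_le[OF scaled] .
    also have "(1 / t) *\<^sub>R x + z = (1 / t) *\<^sub>R (x + t *\<^sub>R z)"
      using 2 by (simp add: algebra_simps)
    finally have "s \<le> (1 / t) * p (x + t *\<^sub>R z) - (1 / t) * a"
      using hom[of "1 / t" "x + t *\<^sub>R z"] 2 by simp
    then show ?thesis
      using 2 by (simp add: field_simps)
  next
    case 3
    have "(1 / - t) * a - p ((1 / - t) *\<^sub>R x - z) \<le> s"
      using s_ge[OF scaled] .
    moreover have "(1 / - t) *\<^sub>R x - z = (1 / - t) *\<^sub>R (x + t *\<^sub>R z)"
      using 3 by (simp add: algebra_simps)
    ultimately have "(1 / - t) * a - (1 / - t) * p (x + t *\<^sub>R z) \<le> s"
      using hom[of "1 / - t" "x + t *\<^sub>R z"] 3 by simp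
    then show ?thesis
      using 3 by (simp add: field_simps)
  qed
qed

definition graph_adjoin :: "('a::real_vector \<times> real) set \<Rightarrow> 'a \<Rightarrow> real \<Rightarrow> ('a \<times> real) set" where
  "graph_adjoin M z s = {(x + t *\<^sub>R z, a + t * s) | x a t. (x, a) \<in> M}"

lemma graph_adjoinI: "(x, a) \<in> M \<Longrightarrow> (x + t *\<^sub>R z, a + t * s) \<in> graph_adjoin M z s"
  unfolding graph_adjoin_def by blast

lemma graph_adjoinE:
  assumes "(w, b) \<in> graph_adjoin M z s"
  obtains x a t where "(x, a) \<in> M" and "w = x + t *\<^sub>R z" and "b = a + t * s"
  using assms unfolding graph_adjoin_def by blast

lemma dominated_linear_graph_adjoin:
  assumes hom: "\<And>t x. t > 0 \<Longrightarrow> p (t *\<^sub>R x) \<le> t * p x"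
    and M: "dominated_linear_graph p M" and z: "\<nexists>a. (z, a) \<in> M"
    and s_ge: "\<And>y b. (y, b) \<in> M \<Longrightarrow> b - p (y - z) \<le> s"
    and s_le: "\<And>y b. (y, b) \<in> M \<Longrightarrow> s \<le> p (y + z) - b"
  shows "dominated_linear_graph p (graph_adjoin M z s)"
proof -
  note add = dominated_linear_graphD(2)[OF M] and scale = dominated_linear_graphD(3)[OF M]
  show ?thesis
    unfolding dominated_linear_graph_def
  proof (intro conjI allI impI)
    fix w a b assume wa: "(w, a) \<in> graph_adjoin M z s" and wb: "(w, b) \<in> graph_adjoin M z s"
    obtain x1 a1 t1 where h1: "(x1, a1) \<in> M" "w = x1 + t1 *\<^sub>R z" "a = a1 + t1 * s"
      using wa by (rule graph_adjoinE)
    obtain x2 a2 t2 where h2: "(x2, a2) \<in> M" "w = x2 + t2 *\<^sub>R z" "b = a2 + t2 * s"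
      using wb by (rule graph_adjoinE)
    note h = h1(1) h2(1) h1(2,3) h2(2,3)
    show "a = b"
    proof (cases "t1 = t2")
      case True
      then show ?thesis
        using h dominated_linear_graphD(1)[OF M] by simp
    next
      case False
      have "x2 + (-1) *\<^sub>R x1 = (t1 - t2) *\<^sub>R z"
        using h(3,5) by (simp add: algebra_simps)
      then have "(1 / (t1 - t2)) *\<^sub>R (x2 + (-1) *\<^sub>R x1) = z"
        using False by simp
      moreover have "((1 / (t1 - t2)) *\<^sub>R (x2 + (-1) *\<^sub>R x1), (1 / (t1 - t2)) * (a2 + (-1) * a1)) \<in> M"
        using h by (intro scale add)
      ultimately show ?thesis
        using z by auto
    qed
  next
    fix w a w' b assume wa: "(w, a) \<in> graph_adjoin M z s" and wb: "(w', b) \<in> graph_adjoin M z s"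
    obtain x1 a1 t1 where h1: "(x1, a1) \<in> M" "w = x1 + t1 *\<^sub>R z" "a = a1 + t1 * s"
      using wa by (rule graph_adjoinE)
    obtain x2 a2 t2 where h2: "(x2, a2) \<in> M" "w' = x2 + t2 *\<^sub>R z" "b = a2 + t2 * s"
      using wb by (rule graph_adjoinE)
    have "w + w' = (x1 + x2) + (t1 + t2) *\<^sub>R z" "a + b = (a1 + a2) + (t1 + t2) * s"
      using h1 h2 by (simp_all add: algebra_simps)
    then show "(w + w', a + b) \<in> graph_adjoin M z s"
      using graph_adjoinI[OF add[OF h1(1) h2(1)]] by simp
  next
    fix w a c assume "(w, a) \<in> graph_adjoin M z s"
    then obtain x1 a1 t1 where h: "(x1, a1) \<in> M" "w = x1 + t1 *\<^sub>R z" "a = a1 + t1 * s"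
      by (rule graph_adjoinE)
    have "c *\<^sub>R w = c *\<^sub>R x1 + (c * t1) *\<^sub>R z" "c * a = c * a1 + (c * t1) * s"
      using h by (simp_all add: algebra_simps)
    then show "(c *\<^sub>R w, c * a) \<in> graph_adjoin M z s"
      using graph_adjoinI[OF scale[OF h(1)]] by simp
  next
    fix w a assume "(w, a) \<in> graph_adjoin M z s"
    then obtain x1 a1 t1 where "(x1, a1) \<in> M" "w = x1 + t1 *\<^sub>R z" "a = a1 + t1 * s"
      by (rule graph_adjoinE)
    then show "a \<le> p w"
      using dominated_linear_graph_extension_bound[OF hom M s_ge s_le] by simp
  next
    show "(0, 0) \<in> graph_adjoin M z s"
      using graph_adjoinI[OF dominated_linear_graphD(5)[OF M], of 0] by simp
  qed
qed

lemma dominated_linear_graph_maximal_total: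
  assumes sub: "\<And>x y. p (x + y) \<le> p x + p y"
    and hom: "\<And>t x. t > 0 \<Longrightarrow> p (t *\<^sub>R x) \<le> t * p x"
    and M: "dominated_linear_graph p M"
    and maximal: "\<And>X. dominated_linear_graph p X \<Longrightarrow> M \<subseteq> X \<Longrightarrow> X = M"
  shows "\<exists>a. (z, a) \<in> M"
proof (rule ccontr)
  assume z: "\<nexists>a. (z, a) \<in> M"
  obtain s where s_ge: "\<And>y b. (y, b) \<in> M \<Longrightarrow> b - p (y - z) \<le> s"
    and s_le: "\<And>y b. (y, b) \<in> M \<Longrightarrow> s \<le> p (y + z) - b"
    using dominated_linear_graph_extension_value[OF sub M] by blast
  have "dominated_linear_graph p (graph_adjoin M z s)"
    using dominated_linear_graph_adjoin[OF hom M z s_ge s_le] .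
  moreover have "M \<subseteq> graph_adjoin M z s"
    using graph_adjoinI[where t = 0] by fastforce
  moreover have "(z, s) \<in> graph_adjoin M z s"
    using graph_adjoinI[OF dominated_linear_graphD(5)[OF M], of 1] by simp
  ultimately show False
    using maximal z by blast
qed

theorem hahn_banach_sublinear:
  fixes p :: "'a::real_vector \<Rightarrow> real"
  assumes sub: "\<And>x y. p (x + y) \<le> p x + p y"
    and hom: "\<And>t x. t > 0 \<Longrightarrow> p (t *\<^sub>R x) \<le> t * p x"
  obtains f where "linear f" and "\<And>x. f x \<le> p x"
proof -
  have "0 \<le> p 0"
    using sub[of 0 0] by simp
  obtain M where M: "dominated_linear_graph p M"
    and maximal: "\<And>X. dominated_linear_graph p X \<Longrightarrow> M \<subseteq> X \<Longrightarrow> X = M"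
    using dominated_linear_graph_maximal[of p] \<open>0 \<le> p 0\<close> by metis
  define f where "f x = (THE a. (x, a) \<in> M)" for x
  have "\<exists>!a. (x, a) \<in> M" for x
    using dominated_linear_graph_maximal_total[OF sub hom M maximal] dominated_linear_graphD(1)[OF M]
    by blast
  then have f_graph: "(x, f x) \<in> M" for x
    unfolding f_def by (rule theI')
  have f_eq: "f x = a" if "(x, a) \<in> M" for x a
    using dominated_linear_graphD(1)[OF M f_graph that] .
  have "linear f"
  proof (rule linearI)
    show "f (x + y) = f x + f y" for x y
      by (rule f_eq) (intro dominated_linear_graphD(2)[OF M] f_graph)
    show "f (c *\<^sub>R x) = c *\<^sub>R f x" for c x
      using f_eq[OF dominated_linear_graphD(3)[OF M f_graph]] by simp
  qed
  moreover have "f x \<le> p x" for x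
    using dominated_linear_graphD(4)[OF M f_graph] .
  ultimately show thesis
    using that by blast
qed

section \<open>Separation of closed convex sets from points\<close>

text \<open>A linear functional below this sublinear function is bounded by the norm and at most
  \<open>-\<delta>\<close> on \<open>-K\<close>.\<close>

definition separation_gauge :: "'a::real_normed_vector set \<Rightarrow> real \<Rightarrow> 'a \<Rightarrow> real" where
  "separation_gauge K \<delta> y = (INF (t, k)\<in>{0..} \<times> K. norm (y + t *\<^sub>R k) - t * \<delta>)"

context
  fixes K :: "'a::real_normed_vector set" and \<delta> :: real
  assumes K_far: "\<And>k. k \<in> K \<Longrightarrow> \<delta> \<le> norm k"
begin

lemma separation_gauge_le:
  assumes "t \<ge> 0" and "k \<in> K"
  shows "separation_gauge K \<delta> y \<le> norm (y + t *\<^sub>R k) - t * \<delta>"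
proof -
  have "- norm y \<le> norm (y + t *\<^sub>R k) - t * \<delta>" if "t \<ge> 0" "k \<in> K" for t k
  proof -
    have "t * \<delta> \<le> norm (t *\<^sub>R k)"
      using that K_far by (simp add: mult_left_mono)
    also have "\<dots> \<le> norm (y + t *\<^sub>R k) + norm y"
      using norm_triangle_ineq4[of "y + t *\<^sub>R k" y] by simp
    finally show ?thesis
      by linarith
  qed
  then have "bdd_below ((\<lambda>(t, k). norm (y + t *\<^sub>R k) - t * \<delta>) ` ({0..} \<times> K))"
    by (force intro: bdd_belowI)
  then show ?thesis
    unfolding separation_gauge_def using assms by (force intro: cINF_lower2)
qed

lemma separation_gauge_greatest:
  assumes "K \<noteq> {}" and "\<And>t k. t \<ge> 0 \<Longrightarrow> k \<in> K \<Longrightarrow> c \<le> norm (y + t *\<^sub>R k) - t * \<delta>"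
  shows "c \<le> separation_gauge K \<delta> y"
  unfolding separation_gauge_def using assms by (force intro: cINF_greatest)

lemma separation_gauge_le_norm:
  assumes "K \<noteq> {}"
  shows "separation_gauge K \<delta> y \<le> norm y"
  using assms separation_gauge_le[of 0] by fastforce

lemma separation_gauge_subadditive:
  assumes "convex K" and "K \<noteq> {}"
  shows "separation_gauge K \<delta> (x + y) \<le> separation_gauge K \<delta> x + separation_gauge K \<delta> y"
proof -
  let ?p = "separation_gauge K \<delta>"
  have sum: "?p (x + y) \<le> (norm (x + t1 *\<^sub>R k1) - t1 * \<delta>) + (norm (y + t2 *\<^sub>R k2) - t2 * \<delta>)"
    if 1: "t1 \<ge> 0" "k1 \<in> K" and 2: "t2 \<ge> 0" "k2 \<in> K" for t1 k1 t2 k2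
  proof (cases "t1 + t2 = 0")
    case True
    then have "t1 = 0" "t2 = 0"
      using 1 2 by auto
    then show ?thesis
      using separation_gauge_le_norm[OF assms(2), of "x + y"] norm_triangle_ineq[of x y] by simp
  next
    case False
    then have t: "t1 + t2 > 0"
      using 1 2 by linarith
    define k where "k = (t1 / (t1 + t2)) *\<^sub>R k1 + (t2 / (t1 + t2)) *\<^sub>R k2"
    have "k \<in> K"
      unfolding k_def using convexD[OF assms(1) 1(2) 2(2)] 1 2 t
      by (simp add: add_divide_distrib[symmetric])
    then have "?p (x + y) \<le> norm (x + y + (t1 + t2) *\<^sub>R k) - (t1 + t2) * \<delta>"
      using t by (intro separation_gauge_le) simp_all
    also have "(t1 + t2) *\<^sub>R k = t1 *\<^sub>R k1 + t2 *\<^sub>R k2"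
      unfolding k_def using t by (simp add: scaleR_add_right)
    then have "x + y + (t1 + t2) *\<^sub>R k = (x + t1 *\<^sub>R k1) + (y + t2 *\<^sub>R k2)"
      by (simp add: algebra_simps)
    finally show ?thesis
      using norm_triangle_ineq[of "x + t1 *\<^sub>R k1" "y + t2 *\<^sub>R k2"] by (simp add: algebra_simps)
  qed
  have "?p (x + y) - (norm (y + t2 *\<^sub>R k2) - t2 * \<delta>) \<le> ?p x" if "t2 \<ge> 0" "k2 \<in> K" for t2 k2
    using sum[OF _ _ that] assms(2) by (intro separation_gauge_greatest) fastforce+
  then have "?p (x + y) - ?p x \<le> ?p y"
    using assms(2) by (intro separation_gauge_greatest) fastforce+
  then show ?thesis
    by linarith
qed

lemma separation_gauge_scaleR:
  assumes "K \<noteq> {}" and "c > 0"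
  shows "separation_gauge K \<delta> (c *\<^sub>R x) \<le> c * separation_gauge K \<delta> x"
proof -
  have "separation_gauge K \<delta> (c *\<^sub>R x) / c \<le> norm (x + t *\<^sub>R k) - t * \<delta>"
    if "t \<ge> 0" "k \<in> K" for t k
  proof -
    have "separation_gauge K \<delta> (c *\<^sub>R x) \<le> norm (c *\<^sub>R x + (c * t) *\<^sub>R k) - (c * t) * \<delta>"
      using that assms(2) by (intro separation_gauge_le) simp_all
    also have "c *\<^sub>R x + (c * t) *\<^sub>R k = c *\<^sub>R (x + t *\<^sub>R k)"
      by (simp add: algebra_simps)
    also have "norm (c *\<^sub>R (x + t *\<^sub>R k)) - (c * t) * \<delta> = c * (norm (x + t *\<^sub>R k) - t * \<delta>)"
      using assms(2) by (simp add: right_diff_distrib)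
    finally show ?thesis
      using assms(2) by (simp add: field_simps)
  qed
  then have "separation_gauge K \<delta> (c *\<^sub>R x) / c \<le> separation_gauge K \<delta> x"
    by (rule separation_gauge_greatest[OF assms(1)])
  then show ?thesis
    using assms(2) by (simp add: field_simps)
qed

end

lemma separating_functional_far_convex:
  fixes K :: "'a::real_normed_vector set"
  assumes "convex K" and "\<And>k. k \<in> K \<Longrightarrow> \<delta> \<le> norm k"
  obtains f :: "'a \<Rightarrow> real" where "bounded_linear f" and "\<And>k. k \<in> K \<Longrightarrow> \<delta> \<le> f k"
proof (cases "K = {}")
  case True
  then show thesis
    using that bounded_linear_zero by blast
next
  case False
  let ?p = "separation_gauge K \<delta>"
  obtain f where "linear f" and f_le: "\<And>x. f x \<le> ?p x"
    using hahn_banach_sublinear[of ?p] separation_gauge_subadditive[OF assms(2,1) False]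
      separation_gauge_scaleR[OF assms(2) False] by metis
  have f_neg: "f (- x) = - f x" for x
    using \<open>linear f\<close> by (rule linear_neg)
  have "bounded_linear f"
  proof (rule bounded_linear_intro[where K = 1])
    show "f (x + y) = f x + f y" "f (c *\<^sub>R x) = c *\<^sub>R f x" for x y c
      using \<open>linear f\<close> by (simp_all add: linear_add linear_scale)
    show "norm (f x) \<le> norm x * 1" for x
      using f_le[of x] f_le[of "- x"] f_neg[of x] separation_gauge_le_norm[OF assms(2) False]
      by (smt (verit) norm_minus_cancel real_norm_def)
  qed
  moreover have "\<delta> \<le> f k" if "k \<in> K" for k
    using f_le[of "- k"] f_neg[of k] that
      separation_gauge_le[where K = K and \<delta> = \<delta> and t = 1 and k = k and y = "- k", OF assms(2)]
    by simp
  ultimately show thesis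
    using that by blast
qed

lemma separating_functional_closed_convex_point:
  fixes A :: "'a::real_normed_vector set"
  assumes "closed A" and "convex A" and "x \<notin> A"
  obtains f :: "'a \<Rightarrow> real" and \<delta> :: real
  where "bounded_linear f" and "\<delta> > 0" and "\<And>a. a \<in> A \<Longrightarrow> f x + \<delta> \<le> f a"
proof (cases "A = {}")
  case True
  then show thesis
    using that[of "\<lambda>_. 0" 1] by simp
next
  case False
  let ?\<delta> = "infdist x A"
  have "?\<delta> > 0"
    using infdist_pos_not_in_closed assms False by blast
  moreover have "?\<delta> \<le> norm k" if "k \<in> (\<lambda>a. a - x) ` A" for k
    using that infdist_le[of _ A x] by (auto simp: dist_norm norm_minus_commute)
  then obtain f where "bounded_linear f" and f: "\<And>k. k \<in> (\<lambda>a. a - x) ` A \<Longrightarrow> ?\<delta> \<le> f k"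
    using separating_functional_far_convex convex_translation_subtract[OF assms(2)] by metis
  moreover have "f x + ?\<delta> \<le> f a" if "a \<in> A" for a
    using f[of "a - x"] that linear_diff[OF bounded_linear.linear[OF \<open>bounded_linear f\<close>]] by simp
  ultimately show thesis
    using that by blast
qed

section \<open>Weak compactness in reflexive spaces\<close>

lemma directed_family_filter:
  assumes "T \<noteq> {}"
    and "\<And>t1 t2. t1 \<in> T \<Longrightarrow> t2 \<in> T \<Longrightarrow> \<exists>t3\<in>T. A t3 \<subseteq> A t1 \<inter> A t2"
  obtains D where "D \<noteq> bot"
    and "\<And>P. eventually P D \<longleftrightarrow> (\<exists>t\<in>T. \<forall>s\<in>T. A s \<subseteq> A t \<longrightarrow> P s)"
proof
  define D where "D = (INF t\<in>T. principal {s\<in>T. A s \<subseteq> A t})"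
  have directed: "\<exists>k\<in>T. principal {s\<in>T. A s \<subseteq> A k}
      \<le> inf (principal {s\<in>T. A s \<subseteq> A i}) (principal {s\<in>T. A s \<subseteq> A j})"
    if "i \<in> T" "j \<in> T" for i j
    using assms(2)[OF that] by fastforce
  show eventually_D: "eventually P D \<longleftrightarrow> (\<exists>t\<in>T. \<forall>s\<in>T. A s \<subseteq> A t \<longrightarrow> P s)" for P
    unfolding D_def by (simp add: eventually_INF_base[OF assms(1) directed] eventually_principal) blast
  show "D \<noteq> bot"
    unfolding trivial_limit_def eventually_D using assms(2) by blast
qed

text \<open>Tychonoff: the evaluations lie in the compact product of the intervals
  \<open>[-M * norm f, M * norm f]\<close>.\<close>

lemma bounded_net_evaluation_cluster_point:
  fixes x :: "'i \<Rightarrow> 'a::real_normed_vector"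
  assumes "D \<noteq> bot" and "eventually (\<lambda>i. norm (x i) \<le> M) D"
  obtains L :: "('a \<Rightarrow>\<^sub>L real) \<Rightarrow> real"
  where "\<And>f. \<bar>L f\<bar> \<le> M * norm f"
    and "\<And>S. closed S \<Longrightarrow> eventually (\<lambda>i. (\<lambda>f. blinfun_apply f (x i)) \<in> S) D \<Longrightarrow> L \<in> S"
proof -
  define \<Phi> where "\<Phi> i = (\<lambda>f::'a \<Rightarrow>\<^sub>L real. blinfun_apply f (x i))" for i
  define K where "K = PiE UNIV (\<lambda>f::'a \<Rightarrow>\<^sub>L real. cball (0::real) (M * norm f))"
  have "compact K"
  proof -
    have "compactin (product_topology (\<lambda>_. euclidean) UNIV) K"
      unfolding K_def compactin_PiE by auto
    then show ?thesis
      by (simp add: euclidean_product_topology)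
  qed
  moreover have "filtermap \<Phi> D \<noteq> bot"
    using assms(1) by (simp add: filtermap_bot_iff)
  moreover have "eventually (\<lambda>g. g \<in> K) (filtermap \<Phi> D)"
    unfolding eventually_filtermap
  proof (rule eventually_mono[OF assms(2)])
    fix i assume "norm (x i) \<le> M"
    then have "\<bar>blinfun_apply f (x i)\<bar> \<le> M * norm f" for f
      using norm_blinfun[of f "x i"] mult_left_mono[of "norm (x i)" M "norm f"]
      by (simp add: mult.commute)
    then show "\<Phi> i \<in> K"
      unfolding K_def \<Phi>_def by (simp add: PiE_def)
  qed
  ultimately obtain L where "L \<in> K" and L: "inf (nhds L) (filtermap \<Phi> D) \<noteq> bot"
    unfolding compact_filter by blast
  have "L \<in> S" if "closed S" and "eventually (\<lambda>i. \<Phi> i \<in> S) D" for S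
  proof (rule ccontr)
    assume "L \<notin> S"
    then have "eventually (\<lambda>g. g \<in> - S) (nhds L)"
      using \<open>closed S\<close> by (intro eventually_nhds_in_open) auto
    then have "eventually (\<lambda>_. False) (inf (nhds L) (filtermap \<Phi> D))"
      using that(2) unfolding eventually_inf eventually_filtermap by force
    then show False
      using L by (simp add: eventually_False)
  qed
  moreover have "\<bar>L f\<bar> \<le> M * norm f" for f
    using \<open>L \<in> K\<close> unfolding K_def by (auto simp: PiE_def)
  ultimately show thesis
    using that unfolding \<Phi>_def by blast
qed

lemma reflexive_bounded_net_weak_cluster_point:
  fixes x :: "'i \<Rightarrow> 'a::real_normed_vector"
  assumes "reflexive_space TYPE('a)" and "D \<noteq> bot"
    and "eventually (\<lambda>i. norm (x i) \<le> M) D"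
  obtains y where "\<And>f C. closed (C :: real set) \<Longrightarrow> eventually (\<lambda>i. blinfun_apply f (x i) \<in> C) D
      \<Longrightarrow> blinfun_apply f y \<in> C"
proof -
  obtain L :: "('a \<Rightarrow>\<^sub>L real) \<Rightarrow> real" where L_bound: "\<And>f. \<bar>L f\<bar> \<le> M * norm f"
    and L_in: "\<And>S. closed S \<Longrightarrow> eventually (\<lambda>i. (\<lambda>f. blinfun_apply f (x i)) \<in> S) D \<Longrightarrow> L \<in> S"
    using bounded_net_evaluation_cluster_point[OF assms(2,3)] by blast
  have "L (f1 + f2) = L f1 + L f2" for f1 f2
  proof -
    have closed: "closed {g::('a \<Rightarrow>\<^sub>L real) \<Rightarrow> real. g (f1 + f2) = g f1 + g f2}"
      by (intro closed_Collect_eq continuous_intros continuous_on_product_coordinates)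
    show ?thesis
      using L_in[OF closed] by (simp add: blinfun.add_left)
  qed
  moreover have "L (r *\<^sub>R f) = r *\<^sub>R L f" for r f
  proof -
    have closed: "closed {g::('a \<Rightarrow>\<^sub>L real) \<Rightarrow> real. g (r *\<^sub>R f) = r * g f}"
      by (intro closed_Collect_eq continuous_intros continuous_on_product_coordinates)
    show ?thesis
      using L_in[OF closed] by (simp add: blinfun.scaleR_left)
  qed
  moreover have "norm (L f) \<le> norm f * M" for f
    using L_bound[of f] by (simp add: mult.commute)
  ultimately have "bounded_linear L"
    by (rule bounded_linear_intro)
  then obtain y where y: "\<And>f. L f = blinfun_apply f y"
    using assms(1) unfolding reflexive_space_def by (metis bounded_linear_Blinfun_apply)
  have "blinfun_apply f y \<in> C"
    if "closed (C :: real set)" and "eventually (\<lambda>i. blinfun_apply f (x i) \<in> C) D" for f C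
  proof -
    have "closed ((\<lambda>g. g f) -` C)"
      using that(1) by (simp add: closed_vimage)
    then show ?thesis
      using L_in[of "(\<lambda>g. g f) -` C"] that(2) by (simp add: y)
  qed
  then show thesis
    using that by blast
qed

lemma weak_cluster_point_in_closed_convex:
  fixes x :: "'i \<Rightarrow> 'a::real_normed_vector"
  assumes "closed A" and "convex A" and "eventually (\<lambda>i. x i \<in> A) D"
    and y: "\<And>f C. closed (C :: real set) \<Longrightarrow> eventually (\<lambda>i. blinfun_apply f (x i) \<in> C) D
      \<Longrightarrow> blinfun_apply f y \<in> C"
  shows "y \<in> A"
proof (rule ccontr)
  assume "y \<notin> A"
  then obtain h :: "'a \<Rightarrow> real" and \<delta> :: real
    where h: "bounded_linear h" and "\<delta> > 0" and sep: "\<And>a. a \<in> A \<Longrightarrow> h y + \<delta> \<le> h a"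
    using separating_functional_closed_convex_point[OF assms(1,2)] by blast
  have "eventually (\<lambda>i. blinfun_apply (Blinfun h) (x i) \<in> {h y + \<delta>..}) D"
    using assms(3) by eventually_elim (simp add: bounded_linear_Blinfun_apply[OF h] sep)
  then have "blinfun_apply (Blinfun h) y \<in> {h y + \<delta>..}"
    using y[of "{h y + \<delta>..}"] by simp
  then show False
    using \<open>\<delta> > 0\<close> by (simp add: bounded_linear_Blinfun_apply[OF h])
qed

lemma reflexive_directed_Inter_closed_convex_nonempty:
  fixes A :: "'t \<Rightarrow> 'a::real_normed_vector set"
  assumes "reflexive_space TYPE('a)" and "T \<noteq> {}"
    and closed: "\<And>t. t \<in> T \<Longrightarrow> closed (A t)"
    and convex: "\<And>t. t \<in> T \<Longrightarrow> convex (A t)"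
    and nonempty: "\<And>t. t \<in> T \<Longrightarrow> A t \<noteq> {}"
    and directed: "\<And>t1 t2. t1 \<in> T \<Longrightarrow> t2 \<in> T \<Longrightarrow> \<exists>t3\<in>T. A t3 \<subseteq> A t1 \<inter> A t2"
    and "t0 \<in> T" and "bounded (A t0)"
  shows "(\<Inter>t\<in>T. A t) \<noteq> {}"
proof -
  obtain D where "D \<noteq> bot"
    and eventually_D: "\<And>P. eventually P D \<longleftrightarrow> (\<exists>t\<in>T. \<forall>s\<in>T. A s \<subseteq> A t \<longrightarrow> P s)"
    using directed_family_filter[OF assms(2) directed] by blast
  define x where "x t = (SOME y. y \<in> A t)" for t
  have x: "x s \<in> A s" if "s \<in> T" for s
    unfolding x_def using nonempty[OF that] by (simp add: some_in_eq)
  have eventually_in: "eventually (\<lambda>s. x s \<in> A t) D" if "t \<in> T" for t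
    unfolding eventually_D using that x by blast
  obtain M where M: "\<And>y. y \<in> A t0 \<Longrightarrow> norm y \<le> M"
    using \<open>bounded (A t0)\<close> unfolding bounded_iff by blast
  have "eventually (\<lambda>s. norm (x s) \<le> M) D"
    by (rule eventually_mono[OF eventually_in[OF \<open>t0 \<in> T\<close>] M])
  then obtain y where "\<And>f C. closed (C :: real set) \<Longrightarrow> eventually (\<lambda>s. blinfun_apply f (x s) \<in> C) D
      \<Longrightarrow> blinfun_apply f y \<in> C"
    using reflexive_bounded_net_weak_cluster_point[OF assms(1) \<open>D \<noteq> bot\<close>] by blast
  then have "y \<in> A t" if "t \<in> T" for t
    using weak_cluster_point_in_closed_convex[OF closed convex eventually_in] that by blast
  then show ?thesis
    by blast
qed

section \<open>Existence sets\<close>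

lemma existence_set_closed:
  assumes "existence_set S"
  shows "closed S"
proof -
  have "y \<in> S" if y: "y \<in> closure S" for y
  proof -
    obtain d where d: "d \<in> S" "\<And>c. c \<in> S \<Longrightarrow> norm (d - c) \<le> norm (y - c)"
      using assms unfolding existence_set_def R_set_def by blast
    have "norm (d - y) < e" if "e > 0" for e
    proof -
      obtain c where c: "c \<in> S" "dist c y < e / 2"
        using y \<open>e > 0\<close> closure_approachable[of y S] half_gt_zero by blast
      have "norm (d - y) \<le> norm (d - c) + norm (c - y)"
        using norm_triangle_ineq[of "d - c" "c - y"] by simp
      also have "\<dots> \<le> 2 * norm (y - c)"
        using d(2)[OF c(1)] by (simp add: norm_minus_commute)
      also have "\<dots> < e"
        using c(2) by (simp add: dist_norm norm_minus_commute)
      finally show ?thesis .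
    qed
    then have "d = y"
      by (metis less_irrefl zero_less_norm_iff right_minus_eq)
    then show ?thesis
      using d by simp
  qed
  then show ?thesis
    using closure_subset_eq by blast
qed

lemma R_set_eq_Int_cball: "R_set F x = F \<inter> (\<Inter>c\<in>F. cball c (norm (x - c)))"
  unfolding R_set_def by (auto simp: dist_norm norm_minus_commute)

lemma R_set_Inter_directed_nonempty:
  fixes F :: "'t \<Rightarrow> 'a::real_normed_vector set"
  assumes "reflexive_space TYPE('a)" and "T \<noteq> {}"
    and convex: "\<And>t. t \<in> T \<Longrightarrow> convex (F t)"
    and existence: "\<And>t. t \<in> T \<Longrightarrow> existence_set (F t)"
    and directed: "\<And>t1 t2. t1 \<in> T \<Longrightarrow> t2 \<in> T \<Longrightarrow> \<exists>t3\<in>T. F t3 \<subseteq> F t1 \<inter> F t2"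
    and "c0 \<in> (\<Inter>t\<in>T. F t)"
  shows "R_set (\<Inter>t\<in>T. F t) x \<noteq> {}"
proof -
  let ?F = "\<Inter>t\<in>T. F t"
  define B where "B = (\<Inter>c\<in>?F. cball c (norm (x - c)))"
  obtain t0 where "t0 \<in> T"
    using assms(2) by blast
  have bounded: "bounded (F t0 \<inter> B)"
    using \<open>c0 \<in> ?F\<close> unfolding B_def by (meson INF_lower Int_lower2 bounded_cball bounded_subset)
  have "(\<Inter>t\<in>T. F t \<inter> B) \<noteq> {}"
  proof (rule reflexive_directed_Inter_closed_convex_nonempty[where A = "\<lambda>t. F t \<inter> B",
        OF assms(1,2) _ _ _ _ \<open>t0 \<in> T\<close> bounded])
    fix t assume t: "t \<in> T"
    show "closed (F t \<inter> B)"
      using existence_set_closed[OF existence[OF t]] by (simp add: B_def closed_Int closed_INT)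
    show "convex (F t \<inter> B)"
      using convex[OF t] by (simp add: B_def convex_Int convex_INT)
    have "R_set (F t) x \<subseteq> F t \<inter> B"
      using t unfolding R_set_eq_Int_cball B_def by blast
    then show "F t \<inter> B \<noteq> {}"
      using existence[OF t] unfolding existence_set_def by blast
  next
    fix t1 t2 assume "t1 \<in> T" "t2 \<in> T"
    then show "\<exists>t3\<in>T. F t3 \<inter> B \<subseteq> F t1 \<inter> B \<inter> (F t2 \<inter> B)"
      using directed by blast
  qed
  then show ?thesis
    unfolding R_set_eq_Int_cball B_def using assms(2) by auto
qed

theorem lemma15:
  fixes F :: "'t \<Rightarrow> 'a::banach set" and T :: "'t set"
  assumes "reflexive_space TYPE('a)"
    and "T \<noteq> {}"
    and "\<And>t. t \<in> T \<Longrightarrow> convex (F t)"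
    and "\<And>t. t \<in> T \<Longrightarrow> existence_set (F t)"
    and "\<And>t1 t2. t1 \<in> T \<Longrightarrow> t2 \<in> T \<Longrightarrow> \<exists>t3\<in>T. F t3 \<subseteq> F t1 \<inter> F t2"
    and "(\<Inter>t\<in>T. F t) \<noteq> {}"
  shows "existence_set (\<Inter>t\<in>T. F t)"
proof -
  obtain c0 where "c0 \<in> (\<Inter>t\<in>T. F t)"
    using assms(6) by blast
  then have "R_set (\<Inter>t\<in>T. F t) x \<noteq> {}" for x
    using R_set_Inter_directed_nonempty[OF assms(1-5)] by blast
  then show ?thesis
    using assms(6) unfolding existence_set_def by blast
qed

end
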